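(* Let $n\ge2$, $r\ge3n+2$ and $s=r(3n+2)+3$. The numerical semigroup $\Gamma_{B_{nr}}=\langle s,\,s+3,\,s+3n+1,\,s+3n+2\rangle$ is homogeneous.
   Context: For a numerical semigroup $\Gamma=\langle n_1,\dots,n_e\rangle$ (minimally generated, here with $n_1=s$) and $0\neq t\in\Gamma$, the set of lengths is $\mathcal T(t)=\{\sum_i r_i : t=\sum_i r_in_i,\ r_i\in\mathbb{N}\}$. A subset $T\subset\Gamma$ is homogeneous if it is empty or $\mathcal T(t)$ is a singleton for all $0\neq t\in T$. $\Gamma$ is homogeneous if the Apéry set $\mathrm{Ap}(\Gamma,n_1)=\{t\in\Gamma: t-n_1\notin\Gamma\}$ is homogeneous. *)

theory Defs
  imports Main
begin

text \<open>A numerical semigroup is given by its (minimal) generator list g = [n_1,...,n_e].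
  A factorization of t is a coefficient vector r (only indices i < length g matter).\<close>

definition semigroup_gen :: "nat list \<Rightarrow> nat set" where
  "semigroup_gen g = {t. \<exists>r::nat \<Rightarrow> nat. t = (\<Sum>i<length g. r i * g ! i)}"

definition lengths :: "nat list \<Rightarrow> nat \<Rightarrow> nat set" where
  "lengths g t = {(\<Sum>i<length g. r i) | r::nat \<Rightarrow> nat. t = (\<Sum>i<length g. r i * g ! i)}"

text \<open>Apery set Ap(Gamma, m) = {t in Gamma. t - m notin Gamma} (integer subtraction:
  if t < m then t - m is negative, hence not in Gamma).\<close>

definition apery :: "nat list \<Rightarrow> nat \<Rightarrow> nat set" where
  "apery g m = {t \<in> semigroup_gen g. \<not> (m \<le> t \<and> t - m \<in> semigroup_gen g)}"

definition homogeneous_set :: "nat list \<Rightarrow> nat set \<Rightarrow> bool" where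
  "homogeneous_set g T \<longleftrightarrow> T = {} \<or> (\<forall>t\<in>T. t \<noteq> 0 \<longrightarrow> (\<exists>l. lengths g t = {l}))"

definition homogeneous_semigroup :: "nat list \<Rightarrow> bool" where
  "homogeneous_semigroup g \<longleftrightarrow> homogeneous_set g (apery g (hd g))"

end

theory Submission
  imports Defs
begin

text \<open>Write \<open>g\<^sub>1 = s + 3\<close>, \<open>g\<^sub>2 = s + 3n + 1\<close>, \<open>g\<^sub>3 = s + 3n + 2\<close>.
  Any \<open>r + 2\<close> copies of \<open>g\<^sub>2, g\<^sub>3\<close> sum to \<open>s\<close> plus an element of the semigroup: either there
  are at least \<open>3n + 2\<close> copies of \<open>g\<^sub>2\<close> and \<open>(3n + 2) g\<^sub>2 = s + (3n + 1) g\<^sub>3\<close>, or the sum is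
  \<open>s + (r + 2) s + c\<close> with \<open>3n \<le> c \<le> 6n + 1\<close>, and \<open>(r + 2) s + c\<close> is realised with copies of
  \<open>s\<close>, \<open>g\<^sub>1\<close> and at most one of \<open>g\<^sub>2, g\<^sub>3\<close> fixing the residue of \<open>c\<close> mod 3. As all generators lie in \<open>[g\<^sub>1, g\<^sub>1 + 3n]\<close>, a factorization of
  length \<open>L\<close> then has value in \<open>[L g\<^sub>1, L g\<^sub>1 + 3n (r + 1)]\<close>, an interval shorter than \<open>g\<^sub>1\<close>,
  so all factorizations have the same length.\<close>

lemma semigroup_gen_4:
  "semigroup_gen [a0, a1, a2, a3] = {t. \<exists>x0 x1 x2 x3. t = x0*a0 + x1*a1 + x2*a2 + x3*a3}"
proof -
  have "(\<exists>r::nat \<Rightarrow> nat. t = r 0*a0 + r 1*a1 + r 2*a2 + r 3*a3) \<longleftrightarrow>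
        (\<exists>x0 x1 x2 x3. t = x0*a0 + x1*a1 + x2*a2 + x3*a3)" for t
  proof
    assume "\<exists>x0 x1 x2 x3. t = x0*a0 + x1*a1 + x2*a2 + x3*a3"
    then obtain x0 x1 x2 x3 where "t = x0*a0 + x1*a1 + x2*a2 + x3*a3" by blast
    then have "t = ([x0,x1,x2,x3]!0)*a0 + ([x0,x1,x2,x3]!1)*a1 + ([x0,x1,x2,x3]!2)*a2
                   + ([x0,x1,x2,x3]!3)*a3"
      by (simp add: numeral_eq_Suc)
    then show "\<exists>r::nat \<Rightarrow> nat. t = r 0*a0 + r 1*a1 + r 2*a2 + r 3*a3" by blast
  qed blast
  then show ?thesis
    by (simp add: semigroup_gen_def numeral_eq_Suc)
qed

lemma lengths_4:
  "lengths [a0, a1, a2, a3] t =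
     {x0 + x1 + x2 + x3 | x0 x1 x2 x3. t = x0*a0 + x1*a1 + x2*a2 + x3*a3}"
proof -
  have "(\<exists>r::nat \<Rightarrow> nat. l = r 0 + r 1 + r 2 + r 3 \<and> t = r 0*a0 + r 1*a1 + r 2*a2 + r 3*a3)
        \<longleftrightarrow> (\<exists>x0 x1 x2 x3. l = x0 + x1 + x2 + x3 \<and> t = x0*a0 + x1*a1 + x2*a2 + x3*a3)" for l
  proof
    assume "\<exists>x0 x1 x2 x3. l = x0 + x1 + x2 + x3 \<and> t = x0*a0 + x1*a1 + x2*a2 + x3*a3"
    then obtain x0 x1 x2 x3 where "l = x0 + x1 + x2 + x3" "t = x0*a0 + x1*a1 + x2*a2 + x3*a3"
      by blast
    moreover define r where "r = (\<lambda>i. [x0,x1,x2,x3] ! i)"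
    ultimately have "l = r 0 + r 1 + r 2 + r 3 \<and> t = r 0*a0 + r 1*a1 + r 2*a2 + r 3*a3"
      by (simp add: numeral_eq_Suc)
    then show "\<exists>r::nat \<Rightarrow> nat. l = r 0 + r 1 + r 2 + r 3 \<and> t = r 0*a0 + r 1*a1 + r 2*a2 + r 3*a3"
      by blast
  qed blast
  then show ?thesis
    by (simp add: lengths_def numeral_eq_Suc)
qed

lemma semigroup_gen_add:
  assumes "u \<in> semigroup_gen g" and "v \<in> semigroup_gen g"
  shows "u + v \<in> semigroup_gen g"
proof -
  obtain x y where "u = (\<Sum>i<length g. x i * g ! i)" and "v = (\<Sum>i<length g. y i * g ! i)"
    using assms unfolding semigroup_gen_def by blast
  then have "u + v = (\<Sum>i<length g. (x i + y i) * g ! i)"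
    by (simp add: sum.distrib add_mult_distrib)
  then show ?thesis
    unfolding semigroup_gen_def by (intro CollectI exI[of _ "\<lambda>i. x i + y i"])
qed

lemma add_notin_apery: "u \<in> semigroup_gen g \<Longrightarrow> m + u \<notin> apery g m"
  by (simp add: apery_def)

lemma offset_mem_semigroup_gen:
  fixes n s k c :: nat
  assumes "3*n \<le> c" and "c \<le> 3*k"
  shows "k*s + c \<in> semigroup_gen [s, s + 3, s + 3*n + 1, s + 3*n + 2]"
proof -
  define q where "q = c div 3"
  have c: "c = 3*q + c mod 3"
    unfolding q_def by simp
  consider "c mod 3 = 0" | "c mod 3 = 1" | "c mod 3 = 2"
    by arith
  then show ?thesis
  proof cases
    case 1
    then obtain m where "k = q + m"
      using c assms(2) le_Suc_ex by fastforce
    then have "k*s + c = m*s + q*(s + 3) + 0*(s + 3*n + 1) + 0*(s + 3*n + 2)"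
      using 1 c by (simp add: algebra_simps)
    then show ?thesis
      unfolding semigroup_gen_4 by blast
  next
    case 2
    then have "n \<le> q" and "q < k"
      using c assms by linarith+
    then obtain p where p: "q = n + p"
      using le_Suc_ex by blast
    then obtain m where "k = p + 1 + m"
      using \<open>q < k\<close> le_Suc_ex[of "p + 1" k] by auto
    then have "k*s + c = m*s + p*(s + 3) + 1*(s + 3*n + 1) + 0*(s + 3*n + 2)"
      using 2 c p by (simp add: algebra_simps)
    then show ?thesis
      unfolding semigroup_gen_4 by blast
  next
    case 3
    then have "n \<le> q" and "q < k"
      using c assms by linarith+
    then obtain p where p: "q = n + p"
      using le_Suc_ex by blast
    then obtain m where "k = p + 1 + m"
      using \<open>q < k\<close> le_Suc_ex[of "p + 1" k] by auto
    then have "k*s + c = m*s + p*(s + 3) + 0*(s + 3*n + 1) + 1*(s + 3*n + 2)"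
      using 3 c p by (simp add: algebra_simps)
    then show ?thesis
      unfolding semigroup_gen_4 by blast
  qed
qed

lemma length_le_of_bounded_excess:
  fixes a b c d :: nat
  assumes eq: "x1*a + x2*b + x3*c = y1*a + y2*b + y3*c"
    and "a \<le> b" "a \<le> c" "b \<le> a + d" "c \<le> a + d"
    and small: "(y2 + y3) * d < a"
  shows "x1 + x2 + x3 \<le> y1 + y2 + y3"
proof -
  have "(x1 + x2 + x3) * a \<le> x1*a + x2*b + x3*c"
    using assms(2,3) by (simp add: add_mult_distrib add_mono)
  also have "\<dots> = y1*a + y2*b + y3*c"
    by (fact eq)
  also have "\<dots> \<le> y1*a + y2*(a + d) + y3*(a + d)"
    using assms(4,5) by (simp add: add_mono)
  also have "\<dots> = (y1 + y2 + y3) * a + (y2 + y3) * d"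
    by (simp add: algebra_simps)
  also have "\<dots> < (y1 + y2 + y3 + 1) * a"
    using small by simp
  finally show ?thesis
    by (metis mult_less_cancel2 Suc_eq_plus1 less_Suc_eq_le)
qed

context
  fixes n r s :: nat
  assumes r_ge: "3*n + 2 \<le> r"
    and s_eq: "s = r*(3*n + 2) + 3"
begin

lemma large_generators_sum_shift:
  assumes "j + w = r + 2"
  shows "\<exists>u \<in> semigroup_gen [s, s + 3, s + 3*n + 1, s + 3*n + 2].
           j*(s + 3*n + 1) + w*(s + 3*n + 2) = s + u"
proof (cases "3*n + 2 \<le> j")
  case True
  then obtain k where "j = 3*n + 2 + k"
    using le_Suc_ex by blast
  then have "j*(s + 3*n + 1) + w*(s + 3*n + 2)
               = s + (0*s + 0*(s + 3) + k*(s + 3*n + 1) + (3*n + 1 + w)*(s + 3*n + 2))"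
    by (simp add: algebra_simps)
  then show ?thesis
    unfolding semigroup_gen_4 by blast
next
  case False
  have "j*(s + 3*n + 1) + w*(s + 3*n + 2) + j = (j + w)*s + (j + w)*(3*n + 2)"
    by (simp add: algebra_simps)
  also have "\<dots> = s + (r + 2)*s + (6*n + 1)"
    using assms s_eq by (simp add: algebra_simps)
  finally have "j*(s + 3*n + 1) + w*(s + 3*n + 2) = s + ((r + 2)*s + (6*n + 1 - j))"
    using False by linarith
  moreover have "(r + 2)*s + (6*n + 1 - j) \<in> semigroup_gen [s, s + 3, s + 3*n + 1, s + 3*n + 2]"
    using False r_ge by (intro offset_mem_semigroup_gen) simp_all
  ultimately show ?thesis
    by blast
qed

lemma apery_factorization_bounds:
  assumes ap: "t \<in> apery [s, s + 3, s + 3*n + 1, s + 3*n + 2] s"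
    and t: "t = x0*s + x1*(s + 3) + x2*(s + 3*n + 1) + x3*(s + 3*n + 2)"
  shows "x0 = 0" and "x2 + x3 \<le> r + 1"
proof -
  show "x0 = 0"
  proof (rule ccontr)
    assume "x0 \<noteq> 0"
    then obtain m where "x0 = Suc m"
      using not0_implies_Suc by blast
    then have "t = s + (m*s + x1*(s + 3) + x2*(s + 3*n + 1) + x3*(s + 3*n + 2))"
      using t by simp
    then show False
      using ap add_notin_apery semigroup_gen_4 by blast
  qed
  show "x2 + x3 \<le> r + 1"
  proof (rule ccontr)
    assume "\<not> x2 + x3 \<le> r + 1"
    then obtain j w x2' x3' where jw: "j + w = r + 2" and x: "x2 = j + x2'" "x3 = w + x3'"
      by (intro that[of "min x2 (r + 2)" "r + 2 - min x2 (r + 2)" "x2 - min x2 (r + 2)"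
            "x3 - (r + 2 - min x2 (r + 2))"]) auto
    obtain u where u: "u \<in> semigroup_gen [s, s + 3, s + 3*n + 1, s + 3*n + 2]"
      and shift: "j*(s + 3*n + 1) + w*(s + 3*n + 2) = s + u"
      using large_generators_sum_shift[OF jw] by blast
    let ?rest = "x0*s + x1*(s + 3) + x2'*(s + 3*n + 1) + x3'*(s + 3*n + 2)"
    have "t = j*(s + 3*n + 1) + w*(s + 3*n + 2) + ?rest"
      using t x by (simp add: algebra_simps)
    also have "\<dots> = s + (u + ?rest)"
      using shift by simp
    finally show False
      using ap add_notin_apery semigroup_gen_add[OF u] semigroup_gen_4 by blast
  qed
qed

lemma apery_lengths:
  assumes "1 \<le> n"
    and ap: "t \<in> apery [s, s + 3, s + 3*n + 1, s + 3*n + 2] s"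
    and t: "t = x0*s + x1*(s + 3) + x2*(s + 3*n + 1) + x3*(s + 3*n + 2)"
  shows "lengths [s, s + 3, s + 3*n + 1, s + 3*n + 2] t = {x0 + x1 + x2 + x3}"
proof
  show "{x0 + x1 + x2 + x3} \<subseteq> lengths [s, s + 3, s + 3*n + 1, s + 3*n + 2] t"
    unfolding lengths_4 using t by blast
  show "lengths [s, s + 3, s + 3*n + 1, s + 3*n + 2] t \<subseteq> {x0 + x1 + x2 + x3}"
  proof
    fix l
    assume "l \<in> lengths [s, s + 3, s + 3*n + 1, s + 3*n + 2] t"
    then obtain y0 y1 y2 y3 where l: "l = y0 + y1 + y2 + y3"
        and t': "t = y0*s + y1*(s + 3) + y2*(s + 3*n + 1) + y3*(s + 3*n + 2)"
      unfolding lengths_4 by blast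
    have x: "x0 = 0" "x2 + x3 \<le> r + 1" and y: "y0 = 0" "y2 + y3 \<le> r + 1"
      using apery_factorization_bounds[OF ap t] apery_factorization_bounds[OF ap t'] by simp_all
    then have eq: "x1*(s + 3) + x2*(s + 3*n + 1) + x3*(s + 3*n + 2)
                   = y1*(s + 3) + y2*(s + 3*n + 1) + y3*(s + 3*n + 2)"
      using t t' by simp
    have "(r + 1)*(3*n) < s + 3"
      using r_ge s_eq by (simp add: algebra_simps)
    then have small_x: "(x2 + x3)*(3*n) < s + 3" and small_y: "(y2 + y3)*(3*n) < s + 3"
      using x y by (meson le_less_trans mult_right_mono zero_le)+
    have "x1 + x2 + x3 \<le> y1 + y2 + y3"
      by (rule length_le_of_bounded_excess[OF eq _ _ _ _ small_y]) (use \<open>1 \<le> n\<close> in simp_all)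
    moreover have "y1 + y2 + y3 \<le> x1 + x2 + x3"
      by (rule length_le_of_bounded_excess[OF eq[symmetric] _ _ _ _ small_x])
        (use \<open>1 \<le> n\<close> in simp_all)
    ultimately show "l \<in> {x0 + x1 + x2 + x3}"
      using l x y by simp
  qed
qed

end

theorem mainTheorem7:
  fixes n r s :: nat
  assumes "n \<ge> 2" and "r \<ge> 3 * n + 2" and "s = r * (3 * n + 2) + 3"
  shows "homogeneous_semigroup [s, s + 3, s + 3 * n + 1, s + 3 * n + 2]"
  unfolding homogeneous_semigroup_def homogeneous_set_def
proof (intro disjI2 ballI impI)
  fix t
  assume "t \<in> apery [s, s + 3, s + 3 * n + 1, s + 3 * n + 2]
                 (hd [s, s + 3, s + 3 * n + 1, s + 3 * n + 2])"
  then have ap: "t \<in> apery [s, s + 3, s + 3 * n + 1, s + 3 * n + 2] s"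
    by simp
  then obtain x0 x1 x2 x3 where "t = x0*s + x1*(s + 3) + x2*(s + 3*n + 1) + x3*(s + 3*n + 2)"
    unfolding apery_def semigroup_gen_4 by blast
  then show "\<exists>l. lengths [s, s + 3, s + 3 * n + 1, s + 3 * n + 2] t = {l}"
    using apery_lengths[OF assms(2,3) _ ap] assms(1) by auto
qed

end
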